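(* Let $e_i=\nu(e_{i-1})+\varepsilon_i$, where $(\varepsilon_i)$ are i.i.d. with density $f_\varepsilon$, and $\nu$ is Lipschitz with $\ell_\nu:=\sup_{a\ne b}|\nu(a)-\nu(b)|/|a-b|<1$ (and $(e_i)$ is the stationary solution $e_i=G(\mathcal F_i)$). Let $\gamma>1$ and assume $\int_{\mathbb R}\psi^2(t)(1+|t|)^{-\gamma}dt<\infty$, $\varepsilon_i\in\mathcal L^q$ with $\gamma<q<\gamma+2$, and $\sum_{k=0}^{p+1}\int_{\mathbb R}|f_\varepsilon^{(k)}(v)|^2(1+|v|)^\gamma dv<\infty$. Then there exists $\chi\in(0,1)$ with $\bar\omega_l(i)=O(\chi^i)$ for $0\le l\le p$.
   Context: $\psi$ is the nondecreasing derivative of a convex $\rho$; fix $\epsilon_0>0$ and $\bar\psi(u;\epsilon_0)=|\psi(u+\epsilon_0)|+|\psi(u-\epsilon_0)|$. $\mathcal F_k=(\dots,\varepsilon_{k-1},\varepsilon_k)$; $(\varepsilon_k')$ an independent i.i.d. copy; $\mathcal F_k^*=(\dots,\varepsilon_{-1},\varepsilon_0',\varepsilon_1,\dots,\varepsilon_k)$ for $k\ge0$, $e_k^*=G(\mathcal F_k^* )$. The conditional density of $e_{i+1}$ given $\mathcal F_i$ is $f_1(u\mid\mathcal F_i)=f_\varepsilon(u-\nu(e_i))$, and $f_1(u\mid\mathcal F_i^* )=f_\varepsilon(u-\nu(e_i^* ))$; $f_1^{(l)}$ its $l$-th $u$-derivative. $\bar\omega_l(i)=\int_{\mathbb R}\|f_1^{(l)}(u\mid\mathcal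 F_i)-f_1^{(l)}(u\mid\mathcal F_i^* )\|\bar\psi(u;\epsilon_0)du$, $\|V\|=(EV^2)^{1/2}$. *)

theory Defs
  imports "HOL-Probability.Probability"
begin

definition L2norm :: "'a measure \<Rightarrow> ('a \<Rightarrow> real) \<Rightarrow> ennreal" where
  "L2norm M V = (let I = (\<integral>\<^sup>+ x. ennreal ((V x)\<^sup>2) \<partial>M)
                  in if I = \<infinity> then \<infinity> else ennreal (sqrt (enn2real I)))"

definition psibar :: "(real \<Rightarrow> real) \<Rightarrow> real \<Rightarrow> real \<Rightarrow> real" where
  "psibar \<psi> \<epsilon>0 u = \<bar>\<psi> (u + \<epsilon>0)\<bar> + \<bar>\<psi> (u - \<epsilon>0)\<bar>"

text \<open>Conditional density f_1(u | F_i) = f_eps(u - nu(e_i)), with e_i = y.\<close>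
definition cond_dens :: "(real \<Rightarrow> real) \<Rightarrow> (real \<Rightarrow> real) \<Rightarrow> real \<Rightarrow> real \<Rightarrow> real" where
  "cond_dens f\<^sub>\<epsilon> \<nu> y u = f\<^sub>\<epsilon> (u - \<nu> y)"

definition omega_bar ::
  "'a measure \<Rightarrow> (real \<Rightarrow> real) \<Rightarrow> (real \<Rightarrow> real) \<Rightarrow> (real \<Rightarrow> real) \<Rightarrow> real
   \<Rightarrow> (nat \<Rightarrow> 'a \<Rightarrow> real) \<Rightarrow> (nat \<Rightarrow> 'a \<Rightarrow> real) \<Rightarrow> nat \<Rightarrow> nat \<Rightarrow> ennreal" where
  "omega_bar M f\<^sub>\<epsilon> \<nu> \<psi> \<epsilon>0 e estar l i =
     (\<integral>\<^sup>+ u. L2norm M (\<lambda>x. (deriv ^^ l) (cond_dens f\<^sub>\<epsilon> \<nu> (e i x)) u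
                            - (deriv ^^ l) (cond_dens f\<^sub>\<epsilon> \<nu> (estar i x)) u)
            * ennreal (psibar \<psi> \<epsilon>0 u) \<partial>lborel)"

end

theory Submission
  imports Defs
begin

(* The stationary solution e is coupled with the process e* obtained by replacing eps_0 with an
   independent copy eps'_0.  Both solve the same contracting recursion, so
   |e_i - e*_i| <= L^i |e_0 - e*_0|.  With g = f_eps^(l), the two conditional densities are the
   translates g(u - nu(e_i)) and g(u - nu(e*_i)); in the weight (1 + |u|)^gamma their squared
   distance is at most min(1, d^2) (1 + |nu(e_i)| + |nu(e*_i)|)^gamma times the weighted energies
   of g and g', where d = nu(e_i) - nu(e*_i).  As min(1, d^2) <= d^s for s = q - gamma in (0, 2]
   and e_i has a finite q-th moment, the expectation of this bound is O(L^(s i)).  Finally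
   a b <= t a^2 / 2 + b^2 / (2 t), applied under the integral defining omega_bar with the weight
   and its inverse (psi is square integrable against (1 + |u|)^-gamma), gives omega_bar_l(i) =
   O(L^(s i / 2)) for the choice t = L^(-s i / 2). *)

lemma one_plus_abs_add_powr_le:
  fixes u t \<gamma> :: real
  shows "(1 + \<bar>u + t\<bar>) powr \<gamma> \<le> (1 + \<bar>u\<bar>) powr \<gamma> * (1 + \<bar>t\<bar>) powr \<bar>\<gamma>\<bar>"
proof -
  have peetre: "(1 + \<bar>x + y\<bar>) powr \<delta> \<le> (1 + \<bar>x\<bar>) powr \<delta> * (1 + \<bar>y\<bar>) powr \<delta>"
    if "0 \<le> \<delta>" for x y \<delta> :: real
  proof -
    have "1 + \<bar>x + y\<bar> \<le> (1 + \<bar>x\<bar>) * (1 + \<bar>y\<bar>)"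
      by (simp add: algebra_simps) (smt (verit) abs_ge_zero abs_triangle_ineq mult_nonneg_nonneg)
    then have "(1 + \<bar>x + y\<bar>) powr \<delta> \<le> ((1 + \<bar>x\<bar>) * (1 + \<bar>y\<bar>)) powr \<delta>"
      using that by (intro powr_mono2) auto
    then show ?thesis by (simp add: powr_mult)
  qed
  show ?thesis
  proof (cases "0 \<le> \<gamma>")
    case True
    then show ?thesis using peetre[OF True, of u t] by simp
  next
    case False
    have "(1 + \<bar>u\<bar>) powr (- \<gamma>) \<le> (1 + \<bar>u + t\<bar>) powr (- \<gamma>) * (1 + \<bar>t\<bar>) powr (- \<gamma>)"
      using peetre[of "- \<gamma>" "u + t" "- t"] False by simp
    then show ?thesis
      using False by (simp add: powr_minus field_simps)
  qed
qed

lemma convex_on_powr_nonneg: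
  assumes "1 \<le> q"
  shows "convex_on {0..} (\<lambda>x::real. x powr q)"
proof (rule convex_onI)
  have powr_le_self: "t powr q \<le> t" if "0 < t" "t < 1" for t :: real
    using powr_mono'[of 1 q t] that assms by simp
  fix t x y :: real
  assume t: "0 < t" "t < 1" and xy: "x \<in> {0..}" "y \<in> {0..}"
  consider "x = 0" | "y = 0" | "0 < x" "0 < y"
    using xy by fastforce
  then show "((1 - t) *\<^sub>R x + t *\<^sub>R y) powr q \<le> (1 - t) * x powr q + t * y powr q"
  proof cases
    case 1
    have "(t * y) powr q = t powr q * y powr q" using t xy by (simp add: powr_mult)
    also have "\<dots> \<le> t * y powr q" using t by (intro mult_right_mono powr_le_self) auto
    finally show ?thesis using 1 by simp
  next
    case 2
    have "((1 - t) * x) powr q = (1 - t) powr q * x powr q" using t xy by (simp add: powr_mult)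
    also have "\<dots> \<le> (1 - t) * x powr q" using t by (intro mult_right_mono powr_le_self) auto
    finally show ?thesis using 2 by simp
  next
    case 3
    then show ?thesis using convex_onD[OF powr_convex[OF assms], of t x y] t by auto
  qed
qed simp

lemma powr_sum_le:
  fixes a x :: "'i \<Rightarrow> real"
  assumes "finite A" "\<And>k. k \<in> A \<Longrightarrow> 0 \<le> a k" "\<And>k. k \<in> A \<Longrightarrow> 0 \<le> x k" "1 \<le> q"
  shows "(\<Sum>k\<in>A. a k * x k) powr q \<le> (\<Sum>k\<in>A. a k) powr (q - 1) * (\<Sum>k\<in>A. a k * x k powr q)"
proof (cases "(\<Sum>k\<in>A. a k) = 0")
  case True
  then have "\<forall>k\<in>A. a k = 0" using assms sum_nonneg_eq_0_iff by blast
  then show ?thesis by simp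
next
  case False
  define s where "s = (\<Sum>k\<in>A. a k)"
  have s: "0 < s" using False assms unfolding s_def by (metis order_le_less sum_nonneg)
  have "A \<noteq> {}" using False by auto
  then have "(\<Sum>k\<in>A. (a k / s) *\<^sub>R x k) powr q \<le> (\<Sum>k\<in>A. (a k / s) * x k powr q)"
    using assms s
    by (intro convex_on_sum[OF assms(1) _ convex_on_powr_nonneg[OF assms(4)]])
       (auto simp: s_def[symmetric] sum_divide_distrib[symmetric])
  then have jensen: "((\<Sum>k\<in>A. a k * x k) / s) powr q \<le> (\<Sum>k\<in>A. a k * x k powr q) / s"
    by (simp add: sum_divide_distrib[symmetric] mult.commute)
  have "(\<Sum>k\<in>A. a k * x k) powr q = s powr q * ((\<Sum>k\<in>A. a k * x k) / s) powr q"
    using s assms by (subst powr_mult[symmetric]) (auto intro!: sum_nonneg)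
  also have "\<dots> \<le> s powr q * ((\<Sum>k\<in>A. a k * x k powr q) / s)"
    using jensen by (intro mult_left_mono) auto
  also have "\<dots> = s powr (q - 1) * (\<Sum>k\<in>A. a k * x k powr q)"
    using s by (simp add: powr_diff)
  finally show ?thesis by (simp add: s_def)
qed

lemma add_powr_le:
  fixes a b q :: real
  assumes "0 \<le> a" "0 \<le> b" "1 \<le> q"
  shows "(a + b) powr q \<le> 2 powr (q - 1) * (a powr q + b powr q)"
  using powr_sum_le[of "{0::nat, 1}" "\<lambda>_. 1" "\<lambda>k. if k = 0 then a else b" q] assms by simp

lemma add5_powr_le:
  fixes t0 t1 t2 t3 t4 q :: real
  assumes "0 \<le> t0" "0 \<le> t1" "0 \<le> t2" "0 \<le> t3" "0 \<le> t4" "1 \<le> q"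
  shows "(t0 + t1 + t2 + t3 + t4) powr q
    \<le> 5 powr (q - 1) * (t0 powr q + t1 powr q + t2 powr q + t3 powr q + t4 powr q)"
proof -
  have "(\<Sum>k<5. 1 * [t0, t1, t2, t3, t4] ! k) powr q
      \<le> (\<Sum>k<(5::nat). (1::real)) powr (q - 1) * (\<Sum>k<5. 1 * ([t0, t1, t2, t3, t4] ! k) powr q)"
    using assms by (intro powr_sum_le) (auto simp: less_Suc_eq numeral_eq_Suc nth_Cons split: nat.splits)
  then show ?thesis by (simp add: numeral_eq_Suc add_ac)
qed

lemma min_powr_le_add:
  fixes a r R K q :: real
  assumes "0 \<le> a" "a \<le> r + R" "0 \<le> r" "0 \<le> R" "0 < K" "1 \<le> q"
  shows "min a K powr q \<le> 2 powr (q - 1) * (r powr q + min R K powr q)"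
proof -
  have "min a K \<le> r + min R K"
    using assms by (auto simp: min_def)
  then have "min a K powr q \<le> (r + min R K) powr q"
    using assms by (intro powr_mono2) auto
  also have "\<dots> \<le> 2 powr (q - 1) * (r powr q + min R K powr q)"
    using assms by (intro add_powr_le) auto
  finally show ?thesis .
qed

lemma min_one_square_le_powr:
  fixes d s :: real
  assumes "0 \<le> d" "0 < s" "s \<le> 2"
  shows "min 1 (d\<^sup>2) \<le> d powr s"
proof (cases "d \<le> 1")
  case True
  have "d\<^sup>2 = d powr 2" using assms by (cases "d = 0") (auto simp: powr_numeral)
  also have "\<dots> \<le> d powr s" using True assms by (intro powr_mono') auto
  finally show ?thesis by simp
next
  case False
  then have "1 \<le> d powr s" using assms by (metis ge_one_powr_ge_zero less_eq_real_def not_le)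
  then show ?thesis by simp
qed

lemma min_one_square_mult_powr_le:
  fixes d D Y \<rho> s \<gamma> :: real
  assumes "0 \<le> d" "d \<le> \<rho> * D" "0 \<le> \<rho>" "0 \<le> D" "1 \<le> Y" "0 \<le> \<gamma>" "0 < s" "s \<le> 2"
  shows "min 1 (d\<^sup>2) * Y powr \<gamma> \<le> \<rho> powr s * (D + Y) powr (s + \<gamma>)"
proof -
  have "min 1 (d\<^sup>2) \<le> d powr s"
    using assms by (intro min_one_square_le_powr)
  also have "\<dots> \<le> (\<rho> * D) powr s"
    using assms by (intro powr_mono2) auto
  finally have "min 1 (d\<^sup>2) * Y powr \<gamma> \<le> \<rho> powr s * (D powr s * Y powr \<gamma>)"
    using assms by (simp add: powr_mult mult_right_mono mult.assoc)
  also have "\<dots> \<le> \<rho> powr s * ((D + Y) powr s * (D + Y) powr \<gamma>)"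
    using assms by (intro mult_left_mono mult_mono powr_mono2) auto
  finally show ?thesis
    by (simp add: powr_add)
qed

lemma mult_le_weighted_squares:
  fixes a b k :: real
  assumes "0 < k"
  shows "a * b \<le> k / 2 * a\<^sup>2 + b\<^sup>2 / (2 * k)"
proof -
  have "k / 2 * a\<^sup>2 + b\<^sup>2 / (2 * k) - a * b = (k * a - b)\<^sup>2 / (2 * k)"
    using assms by (simp add: field_simps power2_eq_square)
  moreover have "0 \<le> (k * a - b)\<^sup>2 / (2 * k)" using assms by simp
  ultimately show ?thesis by linarith
qed

lemma borel_measurable_derivative:
  fixes h h' :: "real \<Rightarrow> real"
  assumes d: "\<And>x. (h has_real_derivative h' x) (at x)"
  shows "h' \<in> borel_measurable borel"
proof (rule borel_measurable_LIMSEQ_real)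
  have cont: "continuous_on UNIV h"
    using d by (meson DERIV_isCont continuous_at_imp_continuous_on)
  fix n :: nat
  show "(\<lambda>x. (h (x + 1 / (real n + 1)) - h x) / (1 / (real n + 1))) \<in> borel_measurable borel"
    by (intro borel_measurable_continuous_onI continuous_intros continuous_on_compose2[OF cont]) auto
next
  fix x :: real
  have lim: "((\<lambda>t. (h (x + t) - h x) / t) \<longlongrightarrow> h' x) (at 0)"
    using d[of x] by (simp add: DERIV_def)
  have "(\<lambda>n. 1 / (real n + 1)) \<longlonglongrightarrow> 0"
    using LIMSEQ_inverse_real_of_nat by (simp add: inverse_eq_divide add.commute)
  then have seq: "filterlim (\<lambda>n. 1 / (real n + 1)) (at 0) sequentially"
    by (intro filterlim_atI) (auto intro!: always_eventually simp: add_pos_nonneg)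
  show "(\<lambda>n. (h (x + 1 / (real n + 1)) - h x) / (1 / (real n + 1))) \<longlonglongrightarrow> h' x"
    using filterlim_compose[OF lim seq] by simp
qed

lemma higher_deriv_shift:
  fixes h :: "real \<Rightarrow> real"
  assumes "\<And>k v. k < l \<Longrightarrow> ((deriv ^^ k) h has_real_derivative (deriv ^^ Suc k) h v) (at v)"
  shows "(deriv ^^ l) (\<lambda>u. h (u - a)) = (\<lambda>u. (deriv ^^ l) h (u - a))"
  using assms
proof (induction l)
  case (Suc l)
  have "(deriv ^^ Suc l) (\<lambda>u. h (u - a)) = deriv (\<lambda>u. (deriv ^^ l) h (u - a))"
    using Suc by simp
  also have "\<dots> = (\<lambda>u. (deriv ^^ Suc l) h (u - a))"
  proof
    fix u
    have "((\<lambda>u. (deriv ^^ l) h (u - a)) has_real_derivative (deriv ^^ Suc l) h (u - a) * 1) (at u)"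
      using Suc.prems by (intro DERIV_chain2[where f = "(deriv ^^ l) h"]) (auto intro!: derivative_eq_intros)
    then show "deriv (\<lambda>u. (deriv ^^ l) h (u - a)) u = (deriv ^^ Suc l) h (u - a)"
      by (simp add: DERIV_imp_deriv)
  qed
  finally show ?case .
qed simp

lemma nn_integral_abs_indicator_square_le:
  fixes h :: "real \<Rightarrow> real"
  assumes [measurable]: "h \<in> borel_measurable borel" and "x \<le> y"
  shows "(\<integral>\<^sup>+ t. ennreal (\<bar>h t\<bar> * indicator {x..y} t) \<partial>lborel)\<^sup>2
    \<le> ennreal (y - x) * (\<integral>\<^sup>+ t. ennreal ((h t)\<^sup>2 * indicator {x..y} t) \<partial>lborel)"
proof -
  have "(\<integral>\<^sup>+ t. ennreal (\<bar>h t\<bar> * indicator {x..y} t) \<partial>lborel)\<^sup>2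
      = (\<integral>\<^sup>+ t. ennreal (\<bar>h t\<bar> * indicator {x..y} t) * indicator {x..y} t \<partial>lborel)\<^sup>2"
    by (intro arg_cong[where f = "\<lambda>z. z\<^sup>2"] nn_integral_cong) (auto simp: indicator_def)
  also have "\<dots> \<le> (\<integral>\<^sup>+ t. (ennreal (\<bar>h t\<bar> * indicator {x..y} t))\<^sup>2 \<partial>lborel)
                  * (\<integral>\<^sup>+ t. (indicator {x..y} t)\<^sup>2 \<partial>lborel)"
    by (intro Cauchy_Schwarz_nn_integral) auto
  also have "(\<integral>\<^sup>+ t. (ennreal (\<bar>h t\<bar> * indicator {x..y} t))\<^sup>2 \<partial>lborel)
      = (\<integral>\<^sup>+ t. ennreal ((h t)\<^sup>2 * indicator {x..y} t) \<partial>lborel)"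
    by (intro nn_integral_cong) (auto simp: indicator_def ennreal_power)
  also have "(\<integral>\<^sup>+ t. (indicator {x..y} t)\<^sup>2 \<partial>lborel) = ennreal (y - x)"
    using \<open>x \<le> y\<close> by (subst nn_integral_cong[where v = "indicator {x..y}"]) (auto simp: indicator_def)
  finally show ?thesis
    by (simp add: mult.commute)
qed

lemma abs_increment_le_nn_integral_deriv:
  fixes h h' :: "real \<Rightarrow> real"
  assumes d: "\<And>t. (h has_real_derivative h' t) (at t)" and "x \<le> y"
    and finite: "(\<integral>\<^sup>+ t. ennreal (\<bar>h' t\<bar> * indicator {x..y} t) \<partial>lborel) < \<infinity>"
  shows "ennreal \<bar>h y - h x\<bar> \<le> (\<integral>\<^sup>+ t. ennreal (\<bar>h' t\<bar> * indicator {x..y} t) \<partial>lborel)"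
proof -
  have [measurable]: "h' \<in> borel_measurable borel" by (rule borel_measurable_derivative[OF d])
  have integrable: "set_integrable lborel {x..y} h'"
    unfolding set_integrable_def using finite
    by (subst integrable_iff_bounded) (auto simp: abs_mult mult.commute)
  have "(h' has_integral (h y - h x)) {x..y}"
    using \<open>x \<le> y\<close> d by (intro fundamental_theorem_of_calculus)
      (auto simp: has_real_derivative_iff_has_vector_derivative[symmetric] intro: has_field_derivative_at_within)
  then have "(LINT t:{x..y}|lborel. h' t) = h y - h x"
    using set_borel_integral_eq_integral(2)[OF integrable] by (simp add: integral_unique)
  then have "\<bar>h y - h x\<bar> \<le> (LINT t:{x..y}|lborel. \<bar>h' t\<bar>)"
    using set_integral_norm_bound[OF integrable] by simp
  moreover have "ennreal (LINT t:{x..y}|lborel. \<bar>h' t\<bar>) = (\<integral>\<^sup>+ t. ennreal (\<bar>h' t\<bar> * indicator {x..y} t) \<partial>lborel)"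
    using set_integrable_abs[OF integrable] unfolding set_lebesgue_integral_def set_integrable_def
    by (subst nn_integral_eq_integral) (auto simp: mult.commute)
  ultimately show ?thesis
    by (metis ennreal_leI)
qed

lemma square_increment_le_nn_integral_deriv:
  fixes h h' :: "real \<Rightarrow> real"
  assumes d: "\<And>t. (h has_real_derivative h' t) (at t)" and "x \<le> y"
  shows "ennreal ((h y - h x)\<^sup>2)
    \<le> ennreal (y - x) * (\<integral>\<^sup>+ t. ennreal ((h' t)\<^sup>2 * indicator {x..y} t) \<partial>lborel)"
proof -
  have [measurable]: "h' \<in> borel_measurable borel" by (rule borel_measurable_derivative[OF d])
  define I where "I = (\<integral>\<^sup>+ t. ennreal ((h' t)\<^sup>2 * indicator {x..y} t) \<partial>lborel)"
  define J where "J = (\<integral>\<^sup>+ t. ennreal (\<bar>h' t\<bar> * indicator {x..y} t) \<partial>lborel)"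
  have cauchy_schwarz: "J\<^sup>2 \<le> ennreal (y - x) * I"
    unfolding I_def J_def using \<open>x \<le> y\<close> by (rule nn_integral_abs_indicator_square_le[rotated]) measurable
  show ?thesis
  proof (cases "I = \<infinity> \<and> x < y")
    case True
    then show ?thesis by (simp add: I_def ennreal_mult_top)
  next
    case False
    then have "ennreal (y - x) * I < \<infinity>"
      using \<open>x \<le> y\<close> by (cases "x = y") (auto simp: ennreal_mult_less_top less_top)
    then have "J\<^sup>2 < \<infinity>"
      using cauchy_schwarz by (rule le_less_trans[rotated])
    then have "J < \<infinity>"
      by (simp add: less_top[symmetric] power_eq_top_ennreal)
    then have "ennreal \<bar>h y - h x\<bar> \<le> J"
      unfolding J_def by (rule abs_increment_le_nn_integral_deriv[OF d \<open>x \<le> y\<close>])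
    then have "ennreal ((h y - h x)\<^sup>2) \<le> J\<^sup>2"
      using power_mono[of _ _ 2] by (fastforce simp: ennreal_power)
    then show ?thesis
      using cauchy_schwarz by (simp add: I_def)
  qed
qed

lemma higher_deriv_cond_dens:
  assumes "\<And>k v. k < l \<Longrightarrow> ((deriv ^^ k) f has_real_derivative (deriv ^^ Suc k) f v) (at v)"
  shows "(deriv ^^ l) (cond_dens f \<nu> y) u = (deriv ^^ l) f (u - \<nu> y)"
  using higher_deriv_shift[OF assms] by (simp add: cond_dens_def[abs_def])

section \<open>Weighted energies of translates\<close>

definition weighted_energy :: "real \<Rightarrow> (real \<Rightarrow> real) \<Rightarrow> ennreal" where
  "weighted_energy \<gamma> g = (\<integral>\<^sup>+ v. ennreal ((g v)\<^sup>2 * (1 + \<bar>v\<bar>) powr \<gamma>) \<partial>lborel)"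

lemma weighted_energy_translate_le:
  assumes [measurable]: "g \<in> borel_measurable borel"
  shows "weighted_energy \<gamma> (\<lambda>u. g (u - a)) \<le> ennreal ((1 + \<bar>a\<bar>) powr \<bar>\<gamma>\<bar>) * weighted_energy \<gamma> g"
proof -
  have "weighted_energy \<gamma> (\<lambda>u. g (u - a)) = (\<integral>\<^sup>+ v. ennreal ((g v)\<^sup>2 * (1 + \<bar>v + a\<bar>) powr \<gamma>) \<partial>lborel)"
    unfolding weighted_energy_def
    using nn_integral_real_affine[of "\<lambda>u. ennreal ((g (u - a))\<^sup>2 * (1 + \<bar>u\<bar>) powr \<gamma>)" 1 a]
    by (simp add: add.commute)
  also have "\<dots> \<le> (\<integral>\<^sup>+ v. ennreal ((1 + \<bar>a\<bar>) powr \<bar>\<gamma>\<bar>) * ennreal ((g v)\<^sup>2 * (1 + \<bar>v\<bar>) powr \<gamma>) \<partial>lborel)"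
    using one_plus_abs_add_powr_le
    by (intro nn_integral_mono) (auto simp: ennreal_mult'[symmetric] mult_ac intro!: ennreal_leI mult_left_mono)
  also have "\<dots> = ennreal ((1 + \<bar>a\<bar>) powr \<bar>\<gamma>\<bar>) * weighted_energy \<gamma> g"
    unfolding weighted_energy_def by (rule nn_integral_cmult) auto
  finally show ?thesis .
qed

lemma weighted_energy_le_sum:
  assumes [measurable]: "g \<in> borel_measurable borel" "h \<in> borel_measurable borel"
    and dominated: "\<And>u. \<bar>k u\<bar> \<le> \<bar>g u\<bar> + \<bar>h u\<bar>"
  shows "weighted_energy \<gamma> k \<le> 2 * weighted_energy \<gamma> g + 2 * weighted_energy \<gamma> h"
proof -
  have pointwise: "(k u)\<^sup>2 * w \<le> 2 * ((g u)\<^sup>2 * w) + 2 * ((h u)\<^sup>2 * w)" if "0 \<le> w" for u w :: real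
  proof -
    have "(k u)\<^sup>2 \<le> (\<bar>g u\<bar> + \<bar>h u\<bar>)\<^sup>2"
      using dominated[of u] by (metis abs_ge_zero power2_abs power_mono)
    also have "\<dots> \<le> 2 * (g u)\<^sup>2 + 2 * (h u)\<^sup>2"
      using zero_le_power2[of "\<bar>g u\<bar> - \<bar>h u\<bar>"] by (simp add: power2_sum power2_diff)
    finally have "(k u)\<^sup>2 * w \<le> (2 * (g u)\<^sup>2 + 2 * (h u)\<^sup>2) * w"
      using that by (rule mult_right_mono)
    then show ?thesis
      by (simp add: algebra_simps)
  qed
  then have "ennreal ((k u)\<^sup>2 * (1 + \<bar>u\<bar>) powr \<gamma>)
      \<le> 2 * ennreal ((g u)\<^sup>2 * (1 + \<bar>u\<bar>) powr \<gamma>) + 2 * ennreal ((h u)\<^sup>2 * (1 + \<bar>u\<bar>) powr \<gamma>)" for u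
  proof -
    have "ennreal ((k u)\<^sup>2 * (1 + \<bar>u\<bar>) powr \<gamma>)
        \<le> ennreal (2 * ((g u)\<^sup>2 * (1 + \<bar>u\<bar>) powr \<gamma>) + 2 * ((h u)\<^sup>2 * (1 + \<bar>u\<bar>) powr \<gamma>))"
      using pointwise[of "(1 + \<bar>u\<bar>) powr \<gamma>" u] by (intro ennreal_leI) auto
    then show ?thesis
      by (simp add: ennreal_mult)
  qed
  then have "weighted_energy \<gamma> k
      \<le> (\<integral>\<^sup>+ u. 2 * ennreal ((g u)\<^sup>2 * (1 + \<bar>u\<bar>) powr \<gamma>) + 2 * ennreal ((h u)\<^sup>2 * (1 + \<bar>u\<bar>) powr \<gamma>) \<partial>lborel)"
    unfolding weighted_energy_def by (intro nn_integral_mono)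
  also have "\<dots> = 2 * weighted_energy \<gamma> g + 2 * weighted_energy \<gamma> h"
    unfolding weighted_energy_def by (simp add: nn_integral_add nn_integral_cmult)
  finally show ?thesis .
qed

lemma nn_integral_weight_indicator_le:
  fixes a b s \<gamma> :: real
  assumes "a \<le> b" "0 \<le> \<gamma>"
  shows "(\<integral>\<^sup>+ u. ennreal ((1 + \<bar>u\<bar>) powr \<gamma> * indicator {s + a..s + b} u) \<partial>lborel)
    \<le> ennreal ((b - a) * ((1 + \<bar>a\<bar> + \<bar>b\<bar>) powr \<gamma> * (1 + \<bar>s\<bar>) powr \<gamma>))"
proof -
  have "(1 + \<bar>u\<bar>) powr \<gamma> \<le> (1 + \<bar>a\<bar> + \<bar>b\<bar>) powr \<gamma> * (1 + \<bar>s\<bar>) powr \<gamma>"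
    if "u \<in> {s + a..s + b}" for u
  proof -
    have "(1 + \<bar>u - s\<bar>) powr \<gamma> \<le> (1 + \<bar>a\<bar> + \<bar>b\<bar>) powr \<gamma>"
      using that \<open>0 \<le> \<gamma>\<close> by (intro powr_mono2) auto
    moreover have "(1 + \<bar>u\<bar>) powr \<gamma> \<le> (1 + \<bar>s\<bar>) powr \<gamma> * (1 + \<bar>u - s\<bar>) powr \<gamma>"
      using one_plus_abs_add_powr_le[of s "u - s" \<gamma>] \<open>0 \<le> \<gamma>\<close> by simp
    ultimately show ?thesis
      by (smt (verit) mult.commute mult_left_mono powr_ge_zero)
  qed
  then have "(\<integral>\<^sup>+ u. ennreal ((1 + \<bar>u\<bar>) powr \<gamma> * indicator {s + a..s + b} u) \<partial>lborel)
      \<le> (\<integral>\<^sup>+ u. ennreal ((1 + \<bar>a\<bar> + \<bar>b\<bar>) powr \<gamma> * (1 + \<bar>s\<bar>) powr \<gamma>) * indicator {s + a..s + b} u \<partial>lborel)"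
    by (intro nn_integral_mono) (auto simp: indicator_def intro!: ennreal_leI)
  also have "\<dots> = ennreal ((b - a) * ((1 + \<bar>a\<bar> + \<bar>b\<bar>) powr \<gamma> * (1 + \<bar>s\<bar>) powr \<gamma>))"
    using \<open>a \<le> b\<close> by (subst nn_integral_cmult_indicator) (auto simp: ennreal_mult'[symmetric] mult.commute)
  finally show ?thesis .
qed

lemma weighted_square_increment_le:
  assumes d: "\<And>t. (g has_real_derivative g' t) (at t)" and "a \<le> b" "0 \<le> w"
  shows "ennreal ((g (u - a) - g (u - b))\<^sup>2 * w)
    \<le> ennreal (b - a) * (\<integral>\<^sup>+ s. ennreal ((g' s)\<^sup>2) * ennreal (w * indicator {s + a..s + b} u) \<partial>lborel)"
proof -
  have [measurable]: "g' \<in> borel_measurable borel" by (rule borel_measurable_derivative[OF d])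
  have "ennreal ((g (u - a) - g (u - b))\<^sup>2)
      \<le> ennreal (b - a) * (\<integral>\<^sup>+ s. ennreal ((g' s)\<^sup>2 * indicator {u - b..u - a} s) \<partial>lborel)"
    using square_increment_le_nn_integral_deriv[OF d, of "u - b" "u - a"] \<open>a \<le> b\<close>
    by (simp add: power2_commute)
  then have "ennreal ((g (u - a) - g (u - b))\<^sup>2 * w)
      \<le> ennreal (b - a) * ((\<integral>\<^sup>+ s. ennreal ((g' s)\<^sup>2 * indicator {u - b..u - a} s) \<partial>lborel) * ennreal w)"
    using \<open>0 \<le> w\<close> by (simp add: ennreal_mult'' mult.assoc[symmetric] mult_right_mono)
  also have "(\<integral>\<^sup>+ s. ennreal ((g' s)\<^sup>2 * indicator {u - b..u - a} s) \<partial>lborel) * ennreal w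
      = (\<integral>\<^sup>+ s. ennreal ((g' s)\<^sup>2 * indicator {u - b..u - a} s) * ennreal w \<partial>lborel)"
    by (rule nn_integral_multc[symmetric]) measurable
  also have "\<dots> = (\<integral>\<^sup>+ s. ennreal ((g' s)\<^sup>2) * ennreal (w * indicator {s + a..s + b} u) \<partial>lborel)"
    by (intro nn_integral_cong) (auto simp: indicator_def)
  finally show ?thesis .
qed

lemma weighted_energy_translate_diff_le_deriv:
  assumes d: "\<And>t. (g has_real_derivative g' t) (at t)" and "0 \<le> \<gamma>"
  shows "weighted_energy \<gamma> (\<lambda>u. g (u - a) - g (u - b))
    \<le> ennreal ((a - b)\<^sup>2 * (1 + \<bar>a\<bar> + \<bar>b\<bar>) powr \<gamma>) * weighted_energy \<gamma> g'"
proof (induction a b rule: linorder_wlog)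
  case (sym a b)
  then show ?case
    by (simp add: weighted_energy_def power2_commute add.commute add.left_commute)
next
  case (le a b)
  have [measurable]: "g' \<in> borel_measurable borel" by (rule borel_measurable_derivative[OF d])
  have [measurable]: "Measurable.pred (borel \<Otimes>\<^sub>M borel) (\<lambda>x::real \<times> real. fst x \<in> {snd x + a..snd x + b})"
    unfolding atLeastAtMost_iff by measurable
  let ?w = "\<lambda>u. (1 + \<bar>u\<bar>) powr \<gamma>"
  let ?Y = "(1 + \<bar>a\<bar> + \<bar>b\<bar>) powr \<gamma>"
  let ?K = "\<lambda>u s. ennreal ((g' s)\<^sup>2) * ennreal (?w u * indicator {s + a..s + b} u)"
  have "weighted_energy \<gamma> (\<lambda>u. g (u - a) - g (u - b)) \<le> (\<integral>\<^sup>+ u. ennreal (b - a) * (\<integral>\<^sup>+ s. ?K u s \<partial>lborel) \<partial>lborel)"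
    unfolding weighted_energy_def using le by (intro nn_integral_mono weighted_square_increment_le[OF d]) auto
  also have "\<dots> = ennreal (b - a) * (\<integral>\<^sup>+ u. (\<integral>\<^sup>+ s. ?K u s \<partial>lborel) \<partial>lborel)"
    by (rule nn_integral_cmult) measurable
  also have "(\<integral>\<^sup>+ u. (\<integral>\<^sup>+ s. ?K u s \<partial>lborel) \<partial>lborel) = (\<integral>\<^sup>+ s. (\<integral>\<^sup>+ u. ?K u s \<partial>lborel) \<partial>lborel)"
    by (rule lborel_pair.Fubini'[symmetric]) measurable
  also have "ennreal (b - a) * (\<integral>\<^sup>+ s. (\<integral>\<^sup>+ u. ?K u s \<partial>lborel) \<partial>lborel)
      \<le> ennreal (b - a) * (\<integral>\<^sup>+ s. ennreal ((b - a) * ?Y) * ennreal ((g' s)\<^sup>2 * ?w s) \<partial>lborel)"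
  proof (intro mult_left_mono nn_integral_mono)
    fix s
    have "(\<integral>\<^sup>+ u. ?K u s \<partial>lborel) \<le> ennreal ((g' s)\<^sup>2) * ennreal ((b - a) * (?Y * ?w s))"
      using le \<open>0 \<le> \<gamma>\<close> by (auto simp: nn_integral_cmult intro!: mult_left_mono nn_integral_weight_indicator_le)
    also have "\<dots> = ennreal ((b - a) * ?Y) * ennreal ((g' s)\<^sup>2 * ?w s)"
      using le by (simp add: ennreal_mult'[symmetric] mult_ac)
    finally show "(\<integral>\<^sup>+ u. ?K u s \<partial>lborel) \<le> \<dots>" .
  qed simp
  also have "\<dots> = ennreal (b - a) * (ennreal ((b - a) * ?Y) * weighted_energy \<gamma> g')"
    unfolding weighted_energy_def by (subst nn_integral_cmult) auto
  also have "\<dots> = ennreal ((a - b)\<^sup>2 * ?Y) * weighted_energy \<gamma> g'"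
    using le unfolding power2_commute[of a b] by (simp add: ennreal_mult'[symmetric] power2_eq_square mult_ac)
  finally show ?case .
qed

lemma weighted_energy_translate_diff_le:
  assumes d: "\<And>t. (g has_real_derivative g' t) (at t)" and "0 \<le> \<gamma>"
  shows "weighted_energy \<gamma> (\<lambda>u. g (u - a) - g (u - b))
    \<le> ennreal (min 1 ((a - b)\<^sup>2) * (1 + \<bar>a\<bar> + \<bar>b\<bar>) powr \<gamma>)
       * (4 * weighted_energy \<gamma> g + weighted_energy \<gamma> g')"
proof -
  have [measurable]: "g \<in> borel_measurable borel"
    using d by (meson DERIV_isCont borel_measurable_continuous_onI continuous_at_imp_continuous_on)
  define Y where "Y = (1 + \<bar>a\<bar> + \<bar>b\<bar>) powr \<gamma>"
  show ?thesis
  proof (cases "(a - b)\<^sup>2 \<le> 1")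
    case True
    have "weighted_energy \<gamma> (\<lambda>u. g (u - a) - g (u - b)) \<le> ennreal ((a - b)\<^sup>2 * Y) * weighted_energy \<gamma> g'"
      unfolding Y_def by (rule weighted_energy_translate_diff_le_deriv[OF d \<open>0 \<le> \<gamma>\<close>])
    also have "\<dots> \<le> ennreal ((a - b)\<^sup>2 * Y) * (4 * weighted_energy \<gamma> g + weighted_energy \<gamma> g')"
      by (intro mult_left_mono) auto
    finally show ?thesis using True by (simp add: Y_def)
  next
    case False
    have Ya: "(1 + \<bar>a\<bar>) powr \<gamma> \<le> Y" and Yb: "(1 + \<bar>b\<bar>) powr \<gamma> \<le> Y"
      using \<open>0 \<le> \<gamma>\<close> unfolding Y_def by (auto intro!: powr_mono2)
    have "weighted_energy \<gamma> (\<lambda>u. g (u - a) - g (u - b))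
        \<le> 2 * weighted_energy \<gamma> (\<lambda>u. g (u - a)) + 2 * weighted_energy \<gamma> (\<lambda>u. g (u - b))"
      by (intro weighted_energy_le_sum) auto
    also have "\<dots> \<le> 2 * (ennreal Y * weighted_energy \<gamma> g) + 2 * (ennreal Y * weighted_energy \<gamma> g)"
      using weighted_energy_translate_le[of g \<gamma>] Ya Yb \<open>0 \<le> \<gamma>\<close>
      by (intro add_mono mult_left_mono order.trans[OF weighted_energy_translate_le] mult_right_mono ennreal_leI) auto
    also have "\<dots> = ennreal Y * (4 * weighted_energy \<gamma> g)"
      by (simp add: mult_ac flip: mult_2)
    also have "\<dots> \<le> ennreal Y * (4 * weighted_energy \<gamma> g + weighted_energy \<gamma> g')"
      by (intro mult_left_mono) auto
    finally show ?thesis using False by (simp add: Y_def)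
  qed
qed

lemma weighted_energy_psibar_finite:
  assumes [measurable]: "\<psi> \<in> borel_measurable borel" and "weighted_energy \<gamma> \<psi> < \<infinity>"
  shows "weighted_energy \<gamma> (psibar \<psi> \<epsilon>0) < \<infinity>"
proof -
  have "weighted_energy \<gamma> (psibar \<psi> \<epsilon>0)
      \<le> 2 * weighted_energy \<gamma> (\<lambda>u. \<psi> (u - - \<epsilon>0)) + 2 * weighted_energy \<gamma> (\<lambda>u. \<psi> (u - \<epsilon>0))"
    by (intro weighted_energy_le_sum) (auto simp: psibar_def)
  also have "\<dots> \<le> 2 * (ennreal ((1 + \<bar>- \<epsilon>0\<bar>) powr \<bar>\<gamma>\<bar>) * weighted_energy \<gamma> \<psi>)
                 + 2 * (ennreal ((1 + \<bar>\<epsilon>0\<bar>) powr \<bar>\<gamma>\<bar>) * weighted_energy \<gamma> \<psi>)"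
    by (intro add_mono mult_left_mono weighted_energy_translate_le) auto
  also have "\<dots> < \<infinity>"
    using assms(2) by (simp add: ennreal_mult_less_top)
  finally show ?thesis .
qed

lemma L2norm_mult_le:
  fixes V :: "'a \<Rightarrow> real"
  assumes "0 < t" "0 < w" "0 \<le> y"
  shows "L2norm M V * ennreal y
    \<le> ennreal (t / 2) * ((\<integral>\<^sup>+ x. ennreal ((V x)\<^sup>2) \<partial>M) * ennreal w) + ennreal (1 / (2 * t)) * ennreal (y\<^sup>2 / w)"
proof (cases "(\<integral>\<^sup>+ x. ennreal ((V x)\<^sup>2) \<partial>M) = \<infinity>")
  case True
  then show ?thesis using assms by (simp add: ennreal_mult_top ennreal_top_mult)
next
  case False
  define r where "r = enn2real (\<integral>\<^sup>+ x. ennreal ((V x)\<^sup>2) \<partial>M)"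
  have r: "(\<integral>\<^sup>+ x. ennreal ((V x)\<^sup>2) \<partial>M) = ennreal r" "0 \<le> r"
    using False by (simp_all add: r_def less_top ennreal_enn2real)
  have "sqrt r * y \<le> (t * w) / 2 * (sqrt r)\<^sup>2 + y\<^sup>2 / (2 * (t * w))"
    using assms by (intro mult_le_weighted_squares) auto
  also have "\<dots> = t / 2 * (r * w) + 1 / (2 * t) * (y\<^sup>2 / w)"
    using r by (simp add: field_simps)
  finally have "ennreal (sqrt r * y) \<le> ennreal (t / 2 * (r * w) + 1 / (2 * t) * (y\<^sup>2 / w))"
    by (rule ennreal_leI)
  also have "\<dots> = ennreal (t / 2) * (ennreal r * ennreal w) + ennreal (1 / (2 * t)) * ennreal (y\<^sup>2 / w)"
    using assms r by (simp add: ennreal_mult[symmetric] ennreal_plus[symmetric] del: ennreal_plus)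
  also have "ennreal (sqrt r * y) = L2norm M V * ennreal y"
  proof -
    have "L2norm M V = ennreal (sqrt r)"
      unfolding L2norm_def Let_def using False by (simp add: r_def)
    then show ?thesis using assms r by (simp add: ennreal_mult)
  qed
  finally show ?thesis by (simp add: r)
qed

lemma nn_integral_L2norm_le_weighted_energy:
  fixes V :: "real \<Rightarrow> 'a \<Rightarrow> real"
  assumes "sigma_finite_measure M"
    and [measurable]: "(\<lambda>(u, x). V u x) \<in> borel_measurable (lborel \<Otimes>\<^sub>M M)" "\<phi> \<in> borel_measurable borel"
    and "\<And>u. 0 \<le> \<phi> u" "0 < t"
  shows "(\<integral>\<^sup>+ u. L2norm M (V u) * ennreal (\<phi> u) \<partial>lborel)
    \<le> ennreal (t / 2) * (\<integral>\<^sup>+ x. weighted_energy \<gamma> (\<lambda>u. V u x) \<partial>M)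
       + ennreal (1 / (2 * t)) * weighted_energy (- \<gamma>) \<phi>"
proof -
  interpret pair_sigma_finite lborel M
    using assms(1) by (intro pair_sigma_finite.intro lborel.sigma_finite_measure_axioms)
  have [measurable]: "(\<lambda>u. \<integral>\<^sup>+ x. ennreal ((V u x)\<^sup>2) \<partial>M) \<in> borel_measurable lborel"
    by (rule M2.borel_measurable_nn_integral) measurable
  have "(\<integral>\<^sup>+ u. L2norm M (V u) * ennreal (\<phi> u) \<partial>lborel)
      \<le> (\<integral>\<^sup>+ u. ennreal (t / 2) * ((\<integral>\<^sup>+ x. ennreal ((V u x)\<^sup>2) \<partial>M) * ennreal ((1 + \<bar>u\<bar>) powr \<gamma>))
                + ennreal (1 / (2 * t)) * ennreal ((\<phi> u)\<^sup>2 / (1 + \<bar>u\<bar>) powr \<gamma>) \<partial>lborel)"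
    using assms by (intro nn_integral_mono L2norm_mult_le) auto
  also have "\<dots> = ennreal (t / 2) * (\<integral>\<^sup>+ u. (\<integral>\<^sup>+ x. ennreal ((V u x)\<^sup>2) \<partial>M) * ennreal ((1 + \<bar>u\<bar>) powr \<gamma>) \<partial>lborel)
                + ennreal (1 / (2 * t)) * (\<integral>\<^sup>+ u. ennreal ((\<phi> u)\<^sup>2 / (1 + \<bar>u\<bar>) powr \<gamma>) \<partial>lborel)"
    by (subst nn_integral_add) (simp_all add: nn_integral_cmult)
  also have "(\<integral>\<^sup>+ u. (\<integral>\<^sup>+ x. ennreal ((V u x)\<^sup>2) \<partial>M) * ennreal ((1 + \<bar>u\<bar>) powr \<gamma>) \<partial>lborel)
      = (\<integral>\<^sup>+ u. (\<integral>\<^sup>+ x. ennreal ((V u x)\<^sup>2 * (1 + \<bar>u\<bar>) powr \<gamma>) \<partial>M) \<partial>lborel)"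
    by (intro nn_integral_cong) (simp add: nn_integral_multc[symmetric] ennreal_mult)
  also have "\<dots> = (\<integral>\<^sup>+ x. weighted_energy \<gamma> (\<lambda>u. V u x) \<partial>M)"
    unfolding weighted_energy_def by (rule Fubini'[symmetric]) measurable
  also have "(\<integral>\<^sup>+ u. ennreal ((\<phi> u)\<^sup>2 / (1 + \<bar>u\<bar>) powr \<gamma>) \<partial>lborel) = weighted_energy (- \<gamma>) \<phi>"
    unfolding weighted_energy_def by (simp add: powr_minus_divide)
  finally show ?thesis .
qed

section \<open>Coupling of the autoregressive process\<close>

lemma distr_iid_reindex:
  fixes X :: "'k \<Rightarrow> 'a \<Rightarrow> real" and \<sigma> :: "nat \<Rightarrow> 'k"
  assumes "prob_space M" and indep: "prob_space.indep_vars M (\<lambda>_. borel) X UNIV"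
    and [measurable]: "\<And>k. X k \<in> borel_measurable M"
    and same_law: "\<And>k. distr M borel (X k) = \<mu>" and "inj \<sigma>"
  shows "distr M (PiM UNIV (\<lambda>_::nat. borel)) (\<lambda>x n. X (\<sigma> n) x) = PiM UNIV (\<lambda>_::nat. \<mu>)"
proof -
  interpret prob_space M by fact
  have sets_\<mu>: "sets \<mu> = sets borel" using same_law[of undefined] by (metis sets_distr)
  then have space_\<mu>: "space \<mu> = UNIV" using sets_eq_imp_space_eq by fastforce
  have "prob_space \<mu>"
    using same_law[of undefined] by (metis prob_space_distr assms(3))
  have joint: "distr M (PiM UNIV (\<lambda>_::'k. \<mu>)) (\<lambda>x k. X k x) = PiM UNIV (\<lambda>_::'k. \<mu>)"
  proof -
    have "distr M (PiM UNIV (\<lambda>_::'k. \<mu>)) (\<lambda>x k. X k x)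
        = distr M (PiM UNIV (\<lambda>_::'k. borel)) (\<lambda>x. \<lambda>k\<in>UNIV. X k x)"
      by (intro distr_cong sets_PiM_cong) (auto simp: sets_\<mu> restrict_def)
    also have "\<dots> = PiM UNIV (\<lambda>k. distr M borel (X k))"
      using indep_vars_iff_distr_eq_PiM[where I = UNIV and M' = "\<lambda>_. borel" and X = X] indep by simp
    finally show ?thesis by (simp add: same_law)
  qed
  have [measurable]: "(\<lambda>x k. X k x) \<in> measurable M (PiM UNIV (\<lambda>_::'k. \<mu>))"
    using sets_\<mu> by (intro measurable_PiM_single') (auto simp: measurable_def space_PiM space_\<mu>)
  have reindex: "(\<lambda>\<omega> n. \<omega> (\<sigma> n)) \<in> measurable (PiM UNIV (\<lambda>_::'k. \<mu>)) (PiM UNIV (\<lambda>_::nat. \<mu>))"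
    by (intro measurable_PiM_single') (auto simp: space_PiM)
  have "distr M (PiM UNIV (\<lambda>_::nat. borel)) (\<lambda>x n. X (\<sigma> n) x)
      = distr M (PiM UNIV (\<lambda>_::nat. \<mu>)) ((\<lambda>\<omega> n. \<omega> (\<sigma> n)) \<circ> (\<lambda>x k. X k x))"
    by (intro distr_cong sets_PiM_cong) (auto simp: sets_\<mu>)
  also have "\<dots> = distr (distr M (PiM UNIV (\<lambda>_::'k. \<mu>)) (\<lambda>x k. X k x)) (PiM UNIV (\<lambda>_::nat. \<mu>)) (\<lambda>\<omega> n. \<omega> (\<sigma> n))"
    by (rule distr_distr[symmetric, OF reindex]) measurable
  also have "\<dots> = PiM UNIV (\<lambda>_::nat. \<mu>)"
    using distr_PiM_reindex[of UNIV "\<lambda>_. \<mu>" \<sigma> UNIV] \<open>prob_space \<mu>\<close> \<open>inj \<sigma>\<close>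
    by (simp add: joint restrict_def)
  finally show ?thesis .
qed

locale ar_coupling =
  fixes M :: "'a measure" and \<epsilon> \<epsilon>' :: "int \<Rightarrow> 'a \<Rightarrow> real" and f :: "real \<Rightarrow> real"
    and \<nu> :: "real \<Rightarrow> real" and G :: "(nat \<Rightarrow> real) \<Rightarrow> real" and e :: "int \<Rightarrow> 'a \<Rightarrow> real"
    and L :: real
  assumes prob: "prob_space M"
    and indep: "prob_space.indep_vars M (\<lambda>_. borel) (\<lambda>k. case k of Inl i \<Rightarrow> \<epsilon> i | Inr i \<Rightarrow> \<epsilon>' i) UNIV"
    and dens: "\<And>i. distributed M lborel (\<epsilon> i) (\<lambda>v. ennreal (f v))"
    and dens': "\<And>i. distributed M lborel (\<epsilon>' i) (\<lambda>v. ennreal (f v))"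
    and lipschitz: "L-lipschitz_on UNIV \<nu>" and L_pos: "0 < L" and L_less_1: "L < 1"
    and G_measurable[measurable]: "G \<in> borel_measurable (PiM UNIV (\<lambda>_::nat. borel))"
    and e_G: "\<And>i x. e i x = G (\<lambda>j. \<epsilon> (i - int j) x)"
    and e_recursion: "\<And>i. AE x in M. e i x = \<nu> (e (i - 1) x) + \<epsilon> i x"
begin

interpretation P: prob_space M by (rule prob)

(* e_index i and estar_index k list, by lag, the innovations that e_i and e*_k depend on;
   the latter reads eps'_0 at lag k. *)
definition "innov k = (case k of Inl i \<Rightarrow> \<epsilon> i | Inr i \<Rightarrow> \<epsilon>' i)"
definition "innov_law = distr M borel (\<epsilon> 0)"
definition "seq_law = PiM UNIV (\<lambda>_::nat. innov_law)"
definition "innov_seq \<sigma> x = (\<lambda>n::nat. innov (\<sigma> n) x)"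
definition "e_index i j = Inl (i - int j)"
definition "estar_index k j = (if j = k then Inr 0 else Inl (int k - int j))"
definition "estar k x = G (innov_seq (estar_index k) x)"

lemma nu_lipschitz: "\<bar>\<nu> a - \<nu> b\<bar> \<le> L * \<bar>a - b\<bar>"
  using lipschitz_onD[OF lipschitz] by (simp add: dist_real_def)

lemma nu_measurable[measurable]: "\<nu> \<in> borel_measurable borel"
  using lipschitz by (intro borel_measurable_continuous_onI lipschitz_on_continuous_on)

lemma eps_measurable[measurable]: "\<epsilon> i \<in> borel_measurable M" "\<epsilon>' i \<in> borel_measurable M"
  using dens[of i] dens'[of i] unfolding distributed_def by (auto simp: measurable_def)

lemma innov_measurable[measurable]: "innov k \<in> borel_measurable M"
  by (cases k) (auto simp: innov_def)

lemma distr_eps: "distr M borel (\<epsilon> i) = density lborel f" "distr M borel (\<epsilon>' i) = density lborel f"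
proof -
  have "distr M borel (\<epsilon> i) = distr M lborel (\<epsilon> i)" "distr M borel (\<epsilon>' i) = distr M lborel (\<epsilon>' i)"
    by (auto intro!: distr_cong)
  then show "distr M borel (\<epsilon> i) = density lborel f" "distr M borel (\<epsilon>' i) = density lborel f"
    using dens[of i] dens'[of i] unfolding distributed_def by auto
qed

lemma distr_innov: "distr M borel (innov k) = innov_law"
  by (cases k) (auto simp: innov_def innov_law_def distr_eps)

lemma indep_innov: "P.indep_vars (\<lambda>_. borel) innov UNIV"
  using indep unfolding innov_def[abs_def] .

lemma distr_innov_seq: "inj \<sigma> \<Longrightarrow> distr M (PiM UNIV (\<lambda>_::nat. borel)) (innov_seq \<sigma>) = seq_law"
  unfolding innov_seq_def[abs_def] seq_law_def
  by (rule distr_iid_reindex[OF prob indep_innov innov_measurable distr_innov])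

lemma innov_seq_measurable[measurable]: "innov_seq \<sigma> \<in> measurable M (PiM UNIV (\<lambda>_::nat. borel))"
  unfolding innov_seq_def[abs_def] by (intro measurable_PiM_single') (auto simp: space_PiM)

lemma sets_seq_law: "sets seq_law = sets (PiM UNIV (\<lambda>_::nat. borel))"
  unfolding seq_law_def by (intro sets_PiM_cong) (auto simp: innov_law_def)

lemma nn_integral_innov_seq:
  assumes "inj \<sigma>" and [measurable]: "\<phi> \<in> borel_measurable (PiM UNIV (\<lambda>_::nat. borel))"
  shows "(\<integral>\<^sup>+ x. \<phi> (innov_seq \<sigma> x) \<partial>M) = (\<integral>\<^sup>+ y. \<phi> y \<partial>seq_law)"
  by (subst distr_innov_seq[OF assms(1), symmetric]) (simp add: nn_integral_distr)

lemma AE_innov_seq: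
  assumes "inj \<sigma>" and [measurable]: "Measurable.pred (PiM UNIV (\<lambda>_::nat. borel)) P"
  shows "(AE x in M. P (innov_seq \<sigma> x)) \<longleftrightarrow> (AE y in seq_law. P y)"
  by (subst distr_innov_seq[OF assms(1), symmetric]) (simp add: AE_distr_iff)

lemma inj_e_index: "inj (e_index i)"
  by (auto simp: inj_def e_index_def)

lemma inj_estar_index: "inj (estar_index k)"
  by (auto simp: inj_def estar_index_def split: if_splits)

lemma e_eq_innov_seq: "e i x = G (innov_seq (e_index i) x)"
  by (simp add: e_G innov_seq_def e_index_def innov_def)

lemma e_measurable[measurable]: "e i \<in> borel_measurable M"
  unfolding e_eq_innov_seq[abs_def] by measurable

lemma estar_measurable[measurable]: "estar i \<in> borel_measurable M"
  unfolding estar_def[abs_def] by measurable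

lemma estar_eq: "estar k x = G (\<lambda>j. if j = k then \<epsilon>' 0 x else \<epsilon> (int k - int j) x)"
  unfolding estar_def innov_seq_def estar_index_def innov_def by (rule arg_cong[where f = G]) auto

definition "satisfies_recursion y \<longleftrightarrow> G y = \<nu> (G (\<lambda>j. y (Suc j))) + y 0"

lemma satisfies_recursion_measurable[measurable]:
  "Measurable.pred (PiM UNIV (\<lambda>_::nat. borel)) satisfies_recursion"
proof -
  have [measurable]: "(\<lambda>y::nat \<Rightarrow> real. \<lambda>j. y (Suc j)) \<in> measurable (PiM UNIV (\<lambda>_. borel)) (PiM UNIV (\<lambda>_. borel))"
    by (intro measurable_PiM_single') (auto simp: space_PiM)
  have [measurable]: "(\<lambda>y. \<nu> (G (\<lambda>j. y (Suc j)))) \<in> borel_measurable (PiM UNIV (\<lambda>_::nat. borel))"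
    by (rule measurable_compose[OF measurable_compose[OF _ G_measurable] nu_measurable]) measurable
  have [measurable]: "(\<lambda>y::nat \<Rightarrow> real. y 0) \<in> borel_measurable (PiM UNIV (\<lambda>_. borel))"
    by (rule measurable_component_singleton) simp
  show ?thesis
    unfolding satisfies_recursion_def[abs_def] pred_def by (intro measurable_equality_set) measurable
qed

(* The recursion is a property of the common law of the innovation sequences of e and e*,
   so e* inherits it from e. *)
lemma AE_satisfies_recursion: "AE y in seq_law. satisfies_recursion y"
proof -
  have "AE x in M. satisfies_recursion (innov_seq (e_index 1) x)"
    using e_recursion[of 1]
  proof eventually_elim
    case (elim x)
    have "innov_seq (e_index 1) x 0 = \<epsilon> 1 x" by (simp add: innov_seq_def e_index_def innov_def)
    moreover have "(\<lambda>j. innov_seq (e_index 1) x (Suc j)) = innov_seq (e_index 0) x"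
      by (auto simp: innov_seq_def e_index_def)
    ultimately show ?case using elim by (simp add: satisfies_recursion_def e_eq_innov_seq)
  qed
  then show ?thesis using AE_innov_seq[OF inj_e_index] by simp
qed

lemma estar_recursion: "AE x in M. \<forall>k. estar (Suc k) x = \<nu> (estar k x) + \<epsilon> (int (Suc k)) x"
proof -
  have "AE x in M. satisfies_recursion (innov_seq (estar_index (Suc k)) x)" for k
    using AE_innov_seq[OF inj_estar_index] AE_satisfies_recursion by simp
  then have "AE x in M. \<forall>k. satisfies_recursion (innov_seq (estar_index (Suc k)) x)"
    by (simp add: AE_all_countable)
  then show ?thesis
  proof eventually_elim
    case (elim x)
    show ?case
    proof
      fix k
      have "innov_seq (estar_index (Suc k)) x 0 = \<epsilon> (int (Suc k)) x"
        by (simp add: innov_seq_def estar_index_def innov_def)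
      moreover have "(\<lambda>j. innov_seq (estar_index (Suc k)) x (Suc j)) = innov_seq (estar_index k) x"
        by (auto simp: innov_seq_def estar_index_def)
      ultimately show "estar (Suc k) x = \<nu> (estar k x) + \<epsilon> (int (Suc k)) x"
        using elim[rule_format, of k] by (simp add: satisfies_recursion_def estar_def)
    qed
  qed
qed

lemma coupled_distance_le: "AE x in M. \<forall>i. \<bar>e (int i) x - estar i x\<bar> \<le> L ^ i * \<bar>e 0 x - estar 0 x\<bar>"
proof -
  have "AE x in M. \<forall>k::nat. e (int (Suc k)) x = \<nu> (e (int k) x) + \<epsilon> (int (Suc k)) x"
    unfolding AE_all_countable
  proof
    fix k :: nat
    show "AE x in M. e (int (Suc k)) x = \<nu> (e (int k) x) + \<epsilon> (int (Suc k)) x"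
      using e_recursion[of "int (Suc k)"] by simp
  qed
  with estar_recursion show ?thesis
  proof eventually_elim
    case (elim x)
    show ?case
    proof
      fix i
      show "\<bar>e (int i) x - estar i x\<bar> \<le> L ^ i * \<bar>e 0 x - estar 0 x\<bar>"
      proof (induction i)
        case (Suc i)
        have "\<bar>e (int (Suc i)) x - estar (Suc i) x\<bar> = \<bar>\<nu> (e (int i) x) - \<nu> (estar i x)\<bar>"
          using elim by simp
        also have "\<dots> \<le> L * \<bar>e (int i) x - estar i x\<bar>" by (rule nu_lipschitz)
        also have "\<dots> \<le> L * (L ^ i * \<bar>e 0 x - estar 0 x\<bar>)"
          using Suc L_pos by (intro mult_left_mono) auto
        finally show ?case by simp
      qed simp
    qed
  qed
qed

end

section \<open>Moments and the expected weighted energy\<close>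

locale ar_moments = ar_coupling +
  fixes q :: real
  assumes q_ge_1: "1 \<le> q"
    and eps_moment_finite: "\<And>i. (\<integral>\<^sup>+ x. ennreal (\<bar>\<epsilon> i x\<bar> powr q) \<partial>M) < \<infinity>"
begin

interpretation P: prob_space M by (rule prob)

interpretation seq_law: prob_space seq_law
  unfolding seq_law_def innov_law_def by (intro prob_space_PiM P.prob_space_distr) auto

definition "c = \<bar>\<nu> 0\<bar>"
definition "eps_moment = enn2real (\<integral>\<^sup>+ x. ennreal (\<bar>\<epsilon> 0 x\<bar> powr q) \<partial>M)"
definition "back_sum n x = (\<Sum>k<n. L ^ k * (c + \<bar>\<epsilon> (- int k) x\<bar>))"
definition "back_sum_bound = (1 / (1 - L)) powr q * 2 powr (q - 1) * (c powr q + eps_moment)"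

lemma eps_moment_eq: "(\<integral>\<^sup>+ x. ennreal (\<bar>\<epsilon> i x\<bar> powr q) \<partial>M) = ennreal eps_moment"
proof -
  have "(\<integral>\<^sup>+ x. ennreal (\<bar>\<epsilon> i x\<bar> powr q) \<partial>M) = (\<integral>\<^sup>+ v. ennreal (\<bar>v\<bar> powr q) \<partial>distr M borel (\<epsilon> i))" for i
    by (subst nn_integral_distr) auto
  then have "(\<integral>\<^sup>+ x. ennreal (\<bar>\<epsilon> i x\<bar> powr q) \<partial>M) = (\<integral>\<^sup>+ x. ennreal (\<bar>\<epsilon> 0 x\<bar> powr q) \<partial>M)"
    by (simp add: distr_eps)
  then show ?thesis
    unfolding eps_moment_def using eps_moment_finite[of 0] by (simp add: less_top ennreal_enn2real)
qed

lemma nu_abs_le: "\<bar>\<nu> y\<bar> \<le> c + L * \<bar>y\<bar>"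
  using nu_lipschitz[of y 0] unfolding c_def by simp

lemma back_sum_nonneg: "0 \<le> back_sum n x"
  unfolding back_sum_def c_def using L_pos by (intro sum_nonneg) auto

lemma back_sum_measurable[measurable]: "back_sum n \<in> borel_measurable M"
  unfolding back_sum_def[abs_def] by measurable

lemma AE_e0_le_back_sum: "AE x in M. \<forall>n. \<bar>e 0 x\<bar> \<le> back_sum n x + L ^ n * \<bar>e (- int n) x\<bar>"
proof -
  have "AE x in M. \<forall>k::nat. e (- int k) x = \<nu> (e (- int (Suc k)) x) + \<epsilon> (- int k) x"
    unfolding AE_all_countable
  proof
    fix k :: nat
    have "- int (Suc k) = - int k - 1" by simp
    then show "AE x in M. e (- int k) x = \<nu> (e (- int (Suc k)) x) + \<epsilon> (- int k) x"
      using e_recursion[of "- int k"] by (simp only:)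
  qed
  then show ?thesis
  proof eventually_elim
    case (elim x)
    show ?case
    proof
      fix n
      show "\<bar>e 0 x\<bar> \<le> back_sum n x + L ^ n * \<bar>e (- int n) x\<bar>"
      proof (induction n)
        case (Suc n)
        have "\<bar>e (- int n) x\<bar> \<le> c + L * \<bar>e (- int (Suc n)) x\<bar> + \<bar>\<epsilon> (- int n) x\<bar>"
          using elim[rule_format, of n] nu_abs_le[of "e (- int (Suc n)) x"] by simp
        then have "L ^ n * \<bar>e (- int n) x\<bar> \<le> L ^ n * (c + L * \<bar>e (- int (Suc n)) x\<bar> + \<bar>\<epsilon> (- int n) x\<bar>)"
          using L_pos by (intro mult_left_mono) auto
        then show ?case using Suc by (simp add: back_sum_def algebra_simps)
      qed (simp add: back_sum_def)
    qed
  qed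
qed

lemma back_sum_powr_le:
  "back_sum n x powr q
    \<le> (\<Sum>k<n. (1 / (1 - L)) powr (q - 1) * 2 powr (q - 1) * L ^ k * (c powr q + \<bar>\<epsilon> (- int k) x\<bar> powr q))"
proof -
  have geometric: "(\<Sum>k<n. L ^ k) \<le> 1 / (1 - L)"
    using L_pos L_less_1 by (simp add: sum_gp_strict divide_right_mono)
  have "back_sum n x powr q \<le> (\<Sum>k<n. L ^ k) powr (q - 1) * (\<Sum>k<n. L ^ k * (c + \<bar>\<epsilon> (- int k) x\<bar>) powr q)"
    unfolding back_sum_def using L_pos q_ge_1 by (intro powr_sum_le) (auto simp: c_def)
  also have "\<dots> \<le> (1 / (1 - L)) powr (q - 1) * (\<Sum>k<n. L ^ k * (2 powr (q - 1) * (c powr q + \<bar>\<epsilon> (- int k) x\<bar> powr q)))"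
    using L_pos q_ge_1 geometric
    by (intro mult_mono powr_mono2 sum_mono mult_left_mono add_powr_le sum_nonneg) (auto simp: c_def)
  finally show ?thesis
    by (simp add: sum_distrib_left mult_ac)
qed

lemma back_sum_moment_le: "(\<integral>\<^sup>+ x. ennreal (back_sum n x powr q) \<partial>M) \<le> ennreal back_sum_bound"
proof -
  define C where "C = (1 / (1 - L)) powr (q - 1) * 2 powr (q - 1)"
  have C: "0 \<le> C" "0 \<le> eps_moment"
    by (simp_all add: C_def eps_moment_def)
  have "(\<integral>\<^sup>+ x. ennreal (back_sum n x powr q) \<partial>M)
      \<le> (\<integral>\<^sup>+ x. (\<Sum>k<n. ennreal (C * L ^ k) * (ennreal (c powr q) + ennreal (\<bar>\<epsilon> (- int k) x\<bar> powr q))) \<partial>M)"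
  proof (intro nn_integral_mono)
    fix x
    have "ennreal (back_sum n x powr q) \<le> ennreal (\<Sum>k<n. C * L ^ k * (c powr q + \<bar>\<epsilon> (- int k) x\<bar> powr q))"
      using back_sum_powr_le[of n x] by (intro ennreal_leI) (simp add: C_def)
    also have "\<dots> = (\<Sum>k<n. ennreal (C * L ^ k) * (ennreal (c powr q) + ennreal (\<bar>\<epsilon> (- int k) x\<bar> powr q)))"
      using C L_pos by (subst sum_ennreal[symmetric]) (auto intro!: sum.cong simp: ennreal_mult ennreal_plus)
    finally show "ennreal (back_sum n x powr q) \<le> \<dots>" .
  qed
  also have "\<dots> = (\<Sum>k<n. ennreal (C * L ^ k) * (ennreal (c powr q) + ennreal eps_moment))"
    by (subst nn_integral_sum) (auto simp: nn_integral_cmult nn_integral_add eps_moment_eq P.emeasure_space_1)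
  also have "\<dots> = (\<Sum>k<n. ennreal (C * L ^ k * (c powr q + eps_moment)))"
    using C L_pos by (intro sum.cong refl) (simp add: ennreal_mult ennreal_plus)
  also have "\<dots> = ennreal ((\<Sum>k<n. L ^ k) * (C * (c powr q + eps_moment)))"
    using C L_pos by (subst sum_ennreal) (auto simp: sum_distrib_right sum_distrib_left mult_ac)
  also have "\<dots> \<le> ennreal (1 / (1 - L) * (C * (c powr q + eps_moment)))"
    using L_pos L_less_1 C
    by (intro ennreal_leI mult_right_mono) (auto simp: sum_gp_strict divide_right_mono)
  also have "1 / (1 - L) * (C * (c powr q + eps_moment)) = back_sum_bound"
    using L_less_1 by (simp add: back_sum_bound_def C_def powr_diff field_simps)
  finally show ?thesis .
qed

lemma G_measurable_seq_law[measurable]: "G \<in> borel_measurable seq_law"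
  using G_measurable by (simp add: measurable_cong_sets[OF sets_seq_law refl])

lemma tendsto_truncated_remainder_moment:
  assumes "0 < K"
  shows "(\<lambda>n. \<integral>\<^sup>+ x. ennreal (min (L ^ n * \<bar>e (- int n) x\<bar>) K powr q) \<partial>M) \<longlonglongrightarrow> 0"
proof -
  have stationary: "(\<integral>\<^sup>+ x. ennreal (min (L ^ n * \<bar>e (- int n) x\<bar>) K powr q) \<partial>M)
      = (\<integral>\<^sup>+ y. ennreal (min (L ^ n * \<bar>G y\<bar>) K powr q) \<partial>seq_law)" for n
    using nn_integral_innov_seq[OF inj_e_index, of "\<lambda>y. ennreal (min (L ^ n * \<bar>G y\<bar>) K powr q)" "- int n"]
    by (simp add: e_eq_innov_seq)
  have "(\<lambda>n. \<integral>\<^sup>+ y. ennreal (min (L ^ n * \<bar>G y\<bar>) K powr q) \<partial>seq_law) \<longlonglongrightarrow> (\<integral>\<^sup>+ y. 0 \<partial>seq_law)"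
  proof (rule nn_integral_dominated_convergence[where w = "\<lambda>_. ennreal (K powr q)"])
    show "AE y in seq_law. ennreal (min (L ^ n * \<bar>G y\<bar>) K powr q) \<le> ennreal (K powr q)" for n
      using assms q_ge_1 L_pos by (intro AE_I2 ennreal_leI powr_mono2) auto
    show "AE y in seq_law. (\<lambda>n. ennreal (min (L ^ n * \<bar>G y\<bar>) K powr q)) \<longlonglongrightarrow> 0"
    proof (intro AE_I2)
      fix y
      have "(\<lambda>n. L ^ n * \<bar>G y\<bar>) \<longlonglongrightarrow> 0 * \<bar>G y\<bar>"
        using L_pos L_less_1 by (intro tendsto_mult LIMSEQ_power_zero tendsto_const) auto
      then have "(\<lambda>n. min (L ^ n * \<bar>G y\<bar>) K) \<longlonglongrightarrow> min 0 K"
        by (intro tendsto_min tendsto_const) auto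
      then have "(\<lambda>n. min (L ^ n * \<bar>G y\<bar>) K powr q) \<longlonglongrightarrow> 0"
        using assms q_ge_1 L_pos
        by (intro tendsto_zero_powrI[where g = "\<lambda>_. q" and b = q]) (auto intro!: always_eventually)
      then show "(\<lambda>n. ennreal (min (L ^ n * \<bar>G y\<bar>) K powr q)) \<longlonglongrightarrow> 0"
        using tendsto_ennrealI by fastforce
    qed
  qed (auto simp: seq_law.emeasure_space_1)
  then show ?thesis by (simp add: stationary)
qed

(* Truncating at K lets the remainder L^n |e_(-n)| vanish in the limit by dominated convergence,
   before finiteness of the moment of e_0 is known. *)
lemma truncated_moment_e0_le:
  assumes "0 < K"
  shows "(\<integral>\<^sup>+ x. ennreal (min \<bar>e 0 x\<bar> K powr q) \<partial>M) \<le> ennreal (2 powr (q - 1)) * ennreal back_sum_bound"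
proof -
  define r where "r n = (\<integral>\<^sup>+ x. ennreal (min (L ^ n * \<bar>e (- int n) x\<bar>) K powr q) \<partial>M)" for n
  have "(\<integral>\<^sup>+ x. ennreal (min \<bar>e 0 x\<bar> K powr q) \<partial>M) \<le> ennreal (2 powr (q - 1)) * (ennreal back_sum_bound + r n)" for n
  proof -
    have "(\<integral>\<^sup>+ x. ennreal (min \<bar>e 0 x\<bar> K powr q) \<partial>M)
        \<le> (\<integral>\<^sup>+ x. ennreal (2 powr (q - 1)) * (ennreal (back_sum n x powr q)
                   + ennreal (min (L ^ n * \<bar>e (- int n) x\<bar>) K powr q)) \<partial>M)"
      using AE_e0_le_back_sum
    proof (rule nn_integral_mono_AE[OF AE_mp], intro AE_I2 impI)
      fix x
      assume "\<forall>n. \<bar>e 0 x\<bar> \<le> back_sum n x + L ^ n * \<bar>e (- int n) x\<bar>"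
      then have "min \<bar>e 0 x\<bar> K powr q
          \<le> 2 powr (q - 1) * (back_sum n x powr q + min (L ^ n * \<bar>e (- int n) x\<bar>) K powr q)"
        using assms q_ge_1 L_pos back_sum_nonneg by (intro min_powr_le_add) auto
      then have "ennreal (min \<bar>e 0 x\<bar> K powr q)
          \<le> ennreal (2 powr (q - 1) * (back_sum n x powr q + min (L ^ n * \<bar>e (- int n) x\<bar>) K powr q))"
        by (rule ennreal_leI)
      then show "ennreal (min \<bar>e 0 x\<bar> K powr q)
          \<le> ennreal (2 powr (q - 1)) * (ennreal (back_sum n x powr q) + ennreal (min (L ^ n * \<bar>e (- int n) x\<bar>) K powr q))"
        by (simp add: ennreal_mult back_sum_nonneg)
    qed
    also have "\<dots> = ennreal (2 powr (q - 1)) * ((\<integral>\<^sup>+ x. ennreal (back_sum n x powr q) \<partial>M) + r n)"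
      unfolding r_def by (simp add: nn_integral_cmult nn_integral_add)
    also have "\<dots> \<le> ennreal (2 powr (q - 1)) * (ennreal back_sum_bound + r n)"
      by (intro mult_left_mono add_mono back_sum_moment_le) auto
    finally show ?thesis .
  qed
  moreover have "(\<lambda>n. ennreal (2 powr (q - 1)) * (ennreal back_sum_bound + r n))
      \<longlonglongrightarrow> ennreal (2 powr (q - 1)) * (ennreal back_sum_bound + 0)"
    using tendsto_truncated_remainder_moment[OF assms] unfolding r_def
    by (intro ennreal_tendsto_cmult tendsto_add tendsto_const) auto
  ultimately show ?thesis
    by (intro LIMSEQ_le_const) auto
qed

lemma moment_e0_le: "(\<integral>\<^sup>+ x. ennreal (\<bar>e 0 x\<bar> powr q) \<partial>M) \<le> ennreal (2 powr (q - 1)) * ennreal back_sum_bound"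
proof -
  let ?f = "\<lambda>m x. ennreal (min \<bar>e 0 x\<bar> (real (Suc m)) powr q)"
  have "(\<lambda>m. integral\<^sup>N M (?f m)) \<longlonglongrightarrow> (\<integral>\<^sup>+ x. ennreal (\<bar>e 0 x\<bar> powr q) \<partial>M)"
  proof (rule nn_integral_LIMSEQ)
    show "incseq ?f"
      using q_ge_1 by (auto simp: incseq_def le_fun_def intro!: ennreal_leI powr_mono2)
    fix x
    obtain N :: nat where "\<bar>e 0 x\<bar> \<le> real N" using real_arch_simple by blast
    then show "(\<lambda>m. ?f m x) \<longlonglongrightarrow> ennreal (\<bar>e 0 x\<bar> powr q)"
      by (intro tendsto_eventually) (auto simp: eventually_sequentially min_def intro!: exI[of _ N])
  qed measurable
  then show ?thesis
    using truncated_moment_e0_le by (intro LIMSEQ_le_const2) auto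
qed

definition "G_moment = (\<integral>\<^sup>+ y. ennreal (\<bar>G y\<bar> powr q) \<partial>seq_law)"

lemma moment_e_eq: "(\<integral>\<^sup>+ x. ennreal (\<bar>e i x\<bar> powr q) \<partial>M) = G_moment"
  unfolding G_moment_def using nn_integral_innov_seq[OF inj_e_index, of "\<lambda>y. ennreal (\<bar>G y\<bar> powr q)" i]
  by (simp add: e_eq_innov_seq)

lemma moment_estar_eq: "(\<integral>\<^sup>+ x. ennreal (\<bar>estar i x\<bar> powr q) \<partial>M) = G_moment"
  unfolding G_moment_def using nn_integral_innov_seq[OF inj_estar_index, of "\<lambda>y. ennreal (\<bar>G y\<bar> powr q)" i]
  by (simp add: estar_def)

lemma G_moment_finite: "G_moment < \<infinity>"
proof -
  have "G_moment \<le> ennreal (2 powr (q - 1)) * ennreal back_sum_bound"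
    using moment_e0_le by (simp add: moment_e_eq)
  also have "\<dots> < \<infinity>"
    by (simp add: ennreal_mult_less_top)
  finally show ?thesis .
qed

definition "coupled_moment_sum i x = (1 + 2 * c) powr q + \<bar>e 0 x\<bar> powr q + \<bar>estar 0 x\<bar> powr q
  + \<bar>e (int i) x\<bar> powr q + \<bar>estar i x\<bar> powr q"

lemma coupled_moment_sum_nonneg: "0 \<le> coupled_moment_sum i x"
  by (simp add: coupled_moment_sum_def)

lemma coupled_moment_sum_measurable[measurable]: "coupled_moment_sum i \<in> borel_measurable M"
  unfolding coupled_moment_sum_def[abs_def] by measurable

lemma nn_integral_coupled_moment_sum:
  "(\<integral>\<^sup>+ x. ennreal (coupled_moment_sum i x) \<partial>M) = ennreal ((1 + 2 * c) powr q) + 4 * G_moment"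
proof -
  have "(\<integral>\<^sup>+ x. ennreal (coupled_moment_sum i x) \<partial>M)
      = ennreal ((1 + 2 * c) powr q) + G_moment + G_moment + G_moment + G_moment"
    by (simp add: coupled_moment_sum_def nn_integral_add moment_e_eq moment_estar_eq P.emeasure_space_1)
  also have "\<dots> = ennreal ((1 + 2 * c) powr q) + 4 * G_moment"
    by (simp add: add.assoc flip: mult_2 distrib_right)
  finally show ?thesis .
qed

lemma AE_coupled_weight_le:
  assumes "0 \<le> \<gamma>" "q = s + \<gamma>" "0 < s" "s \<le> 2"
  shows "AE x in M. min 1 ((\<nu> (e (int i) x) - \<nu> (estar i x))\<^sup>2) * (1 + \<bar>\<nu> (e (int i) x)\<bar> + \<bar>\<nu> (estar i x)\<bar>) powr \<gamma>
    \<le> (L powr s) ^ i * 5 powr (q - 1) * coupled_moment_sum i x"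
  using coupled_distance_le
proof eventually_elim
  case (elim x)
  define D where "D = \<bar>e 0 x - estar 0 x\<bar>"
  define Y where "Y = 1 + \<bar>\<nu> (e (int i) x)\<bar> + \<bar>\<nu> (estar i x)\<bar>"
  have nu_abs: "\<bar>\<nu> y\<bar> \<le> c + \<bar>y\<bar>" for y
  proof -
    have "L * \<bar>y\<bar> \<le> \<bar>y\<bar>" using L_pos L_less_1 by (intro mult_left_le_one_le) auto
    then show ?thesis using nu_abs_le[of y] by linarith
  qed
  have "\<bar>\<nu> (e (int i) x) - \<nu> (estar i x)\<bar> \<le> L * \<bar>e (int i) x - estar i x\<bar>"
    by (rule nu_lipschitz)
  also have "\<dots> \<le> L * (L ^ i * D)"
    using elim L_pos unfolding D_def by (intro mult_left_mono) auto
  also have "\<dots> \<le> L ^ i * D"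
    using L_pos L_less_1 by (intro mult_left_le_one_le) (auto simp: D_def)
  finally have "min 1 ((\<nu> (e (int i) x) - \<nu> (estar i x))\<^sup>2) * Y powr \<gamma> \<le> (L ^ i) powr s * (D + Y) powr q"
    using assms min_one_square_mult_powr_le[of "\<bar>\<nu> (e (int i) x) - \<nu> (estar i x)\<bar>" "L ^ i" D Y \<gamma> s] L_pos
    by (simp add: D_def Y_def)
  also have "(L ^ i) powr s = (L powr s) ^ i"
    using L_pos by (simp add: powr_realpow[symmetric] powr_powr powr_power mult.commute)
  also have "(D + Y) powr q \<le> ((1 + 2 * c) + \<bar>e 0 x\<bar> + \<bar>estar 0 x\<bar> + \<bar>e (int i) x\<bar> + \<bar>estar i x\<bar>) powr q"
    using nu_abs[of "e (int i) x"] nu_abs[of "estar i x"] abs_triangle_ineq4[of "e 0 x" "estar 0 x"] q_ge_1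
    by (intro powr_mono2) (auto simp: D_def Y_def)
  also have "\<dots> \<le> 5 powr (q - 1) * coupled_moment_sum i x"
    unfolding coupled_moment_sum_def using q_ge_1 by (intro add5_powr_le) (auto simp: c_def)
  finally show ?case
    using L_pos by (simp add: Y_def mult_left_mono mult.assoc)
qed

lemma expected_weighted_energy_le:
  assumes d: "\<And>t. (g has_real_derivative g' t) (at t)"
    and finite: "weighted_energy \<gamma> g < \<infinity>" "weighted_energy \<gamma> g' < \<infinity>"
    and "0 \<le> \<gamma>" "q = s + \<gamma>" "0 < s" "s \<le> 2"
  obtains K where "0 \<le> K"
    "\<And>i. (\<integral>\<^sup>+ x. weighted_energy \<gamma> (\<lambda>u. g (u - \<nu> (e (int i) x)) - g (u - \<nu> (estar i x))) \<partial>M)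
       \<le> ennreal (K * (L powr s) ^ i)"
proof
  define F where "F = enn2real (4 * weighted_energy \<gamma> g + weighted_energy \<gamma> g')"
  have F: "4 * weighted_energy \<gamma> g + weighted_energy \<gamma> g' = ennreal F" "0 \<le> F"
    using finite by (simp_all add: F_def ennreal_enn2real ennreal_mult_less_top less_top)
  define m where "m = enn2real (ennreal ((1 + 2 * c) powr q) + 4 * G_moment)"
  have m: "(\<integral>\<^sup>+ x. ennreal (coupled_moment_sum i x) \<partial>M) = ennreal m" "0 \<le> m" for i
    using G_moment_finite
    by (simp_all add: m_def nn_integral_coupled_moment_sum ennreal_enn2real ennreal_mult_less_top less_top)
  define K where "K = F * 5 powr (q - 1) * m"
  show "0 \<le> K"
    unfolding K_def using F m by simp
  fix i
  have "(\<integral>\<^sup>+ x. weighted_energy \<gamma> (\<lambda>u. g (u - \<nu> (e (int i) x)) - g (u - \<nu> (estar i x))) \<partial>M)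
      \<le> (\<integral>\<^sup>+ x. ennreal (F * (L powr s) ^ i * 5 powr (q - 1)) * ennreal (coupled_moment_sum i x) \<partial>M)"
    using AE_coupled_weight_le[OF assms(4-7), of i]
  proof (rule nn_integral_mono_AE[OF AE_mp], intro AE_I2 impI)
    fix x
    let ?a = "\<nu> (e (int i) x)" and ?b = "\<nu> (estar i x)"
    assume weight: "min 1 ((?a - ?b)\<^sup>2) * (1 + \<bar>?a\<bar> + \<bar>?b\<bar>) powr \<gamma>
      \<le> (L powr s) ^ i * 5 powr (q - 1) * coupled_moment_sum i x"
    have "weighted_energy \<gamma> (\<lambda>u. g (u - ?a) - g (u - ?b))
        \<le> ennreal (min 1 ((?a - ?b)\<^sup>2) * (1 + \<bar>?a\<bar> + \<bar>?b\<bar>) powr \<gamma>) * ennreal F"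
      using weighted_energy_translate_diff_le[OF d \<open>0 \<le> \<gamma>\<close>, of ?a ?b] by (simp add: F)
    also have "\<dots> \<le> ennreal (F * (L powr s) ^ i * 5 powr (q - 1)) * ennreal (coupled_moment_sum i x)"
      using weight F coupled_moment_sum_nonneg[of i x]
      by (simp add: ennreal_mult'[symmetric] mult_ac ennreal_leI mult_left_mono)
    finally show "weighted_energy \<gamma> (\<lambda>u. g (u - ?a) - g (u - ?b)) \<le> \<dots>" .
  qed
  also have "\<dots> = ennreal (F * (L powr s) ^ i * 5 powr (q - 1)) * ennreal m"
    by (rule trans[OF nn_integral_cmult]) (measurable, simp add: m)
  also have "\<dots> = ennreal (K * (L powr s) ^ i)"
    using F m by (simp add: K_def ennreal_mult'[symmetric] mult.commute mult.left_commute)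
  finally show "(\<integral>\<^sup>+ x. weighted_energy \<gamma> (\<lambda>u. g (u - \<nu> (e (int i) x)) - g (u - \<nu> (estar i x))) \<partial>M)
      \<le> ennreal (K * (L powr s) ^ i)" .
qed

lemma omega_bar_le_geometric:
  assumes shift: "\<And>y u. (deriv ^^ l) (cond_dens f \<nu> y) u = g (u - \<nu> y)"
    and d: "\<And>t. (g has_real_derivative g' t) (at t)"
    and finite: "weighted_energy \<gamma> g < \<infinity>" "weighted_energy \<gamma> g' < \<infinity>"
    and "0 \<le> \<gamma>" "q = s + \<gamma>" "0 < s" "s \<le> 2"
    and [measurable]: "\<psi> \<in> borel_measurable borel" and "weighted_energy (- \<gamma>) \<psi> < \<infinity>"
  shows "\<exists>C. \<forall>i. omega_bar M f \<nu> \<psi> \<epsilon>0 (\<lambda>k. e (int k)) estar l i \<le> ennreal (C * (L powr (s / 2)) ^ i)"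
proof -
  obtain K where "0 \<le> K" and K: "\<And>i. (\<integral>\<^sup>+ x. weighted_energy \<gamma> (\<lambda>u. g (u - \<nu> (e (int i) x)) - g (u - \<nu> (estar i x))) \<partial>M)
      \<le> ennreal (K * (L powr s) ^ i)"
    using expected_weighted_energy_le[OF d finite assms(5-8)] by blast
  define P where "P = enn2real (weighted_energy (- \<gamma>) (psibar \<psi> \<epsilon>0))"
  have P: "weighted_energy (- \<gamma>) (psibar \<psi> \<epsilon>0) = ennreal P" "0 \<le> P"
    using weighted_energy_psibar_finite[OF assms(9,10)] by (simp_all add: P_def ennreal_enn2real less_top)
  define \<kappa> where "\<kappa> = L powr (s / 2)"
  have "0 < \<kappa>" "L powr s = \<kappa>\<^sup>2"
    using L_pos by (simp_all add: \<kappa>_def powr_power)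
  have [measurable]: "g \<in> borel_measurable borel"
    using d by (meson DERIV_isCont borel_measurable_continuous_onI continuous_at_imp_continuous_on)
  show ?thesis
  proof (intro exI allI)
    fix i
    \<comment> \<open>this choice of the AM-GM parameter balances both terms at order \<open>\<kappa>\<^sup>i\<close>\<close>
    define t where "t = 1 / \<kappa> ^ i"
    have "0 < t" using \<open>0 < \<kappa>\<close> by (simp add: t_def)
    have "omega_bar M f \<nu> \<psi> \<epsilon>0 (\<lambda>k. e (int k)) estar l i
        = (\<integral>\<^sup>+ u. L2norm M (\<lambda>x. g (u - \<nu> (e (int i) x)) - g (u - \<nu> (estar i x))) * ennreal (psibar \<psi> \<epsilon>0 u) \<partial>lborel)"
      unfolding omega_bar_def by (simp add: shift)
    also have "\<dots> \<le> ennreal (t / 2) * (\<integral>\<^sup>+ x. weighted_energy \<gamma> (\<lambda>u. g (u - \<nu> (e (int i) x)) - g (u - \<nu> (estar i x))) \<partial>M)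
                    + ennreal (1 / (2 * t)) * weighted_energy (- \<gamma>) (psibar \<psi> \<epsilon>0)"
      using \<open>0 < t\<close> P.sigma_finite_measure_axioms
      by (intro nn_integral_L2norm_le_weighted_energy) (auto simp: psibar_def)
    also have "\<dots> \<le> ennreal (t / 2) * ennreal (K * (\<kappa>\<^sup>2) ^ i) + ennreal (1 / (2 * t)) * ennreal P"
      using K[of i] by (auto simp: P \<open>L powr s = \<kappa>\<^sup>2\<close> intro!: add_mono mult_left_mono)
    also have "\<dots> = ennreal ((K + P) / 2 * \<kappa> ^ i)"
      using \<open>0 < \<kappa>\<close> \<open>0 \<le> K\<close> P
      by (simp add: t_def ennreal_mult[symmetric] ennreal_plus[symmetric] field_simps power_mult[symmetric]
                    power2_eq_square power_mult_distrib del: ennreal_plus)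
    finally show "omega_bar M f \<nu> \<psi> \<epsilon>0 (\<lambda>k. e (int k)) estar l i \<le> ennreal ((K + P) / 2 * (L powr (s / 2)) ^ i)"
      by (simp add: \<kappa>_def)
  qed
qed

end

theorem proposition6:
  fixes M :: "'a measure"
    and \<epsilon> \<epsilon>' :: "int \<Rightarrow> 'a \<Rightarrow> real"
    and f\<^sub>\<epsilon> :: "real \<Rightarrow> real"
    and \<nu> :: "real \<Rightarrow> real"
    and G :: "(nat \<Rightarrow> real) \<Rightarrow> real"
    and e :: "int \<Rightarrow> 'a \<Rightarrow> real"
    and \<rho> \<psi> :: "real \<Rightarrow> real"
    and \<epsilon>0 \<gamma> q L :: real
    and p :: nat
  assumes prob: "prob_space M"
    and indep: "prob_space.indep_vars M (\<lambda>_. borel)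
                  (\<lambda>k. case k of Inl i \<Rightarrow> \<epsilon> i | Inr i \<Rightarrow> \<epsilon>' i) UNIV"
    and dens: "\<And>i. distributed M lborel (\<epsilon> i) (\<lambda>v. ennreal (f\<^sub>\<epsilon> v))"
    and dens': "\<And>i. distributed M lborel (\<epsilon>' i) (\<lambda>v. ennreal (f\<^sub>\<epsilon> v))"
    and lip: "L-lipschitz_on UNIV \<nu>" and L_lt1: "L < 1"
    and G_meas: "G \<in> borel_measurable (PiM UNIV (\<lambda>_::nat. borel))"
    and e_G: "\<And>i x. e i x = G (\<lambda>j. \<epsilon> (i - int j) x)"
    and e_rec: "\<And>i. AE x in M. e i x = \<nu> (e (i - 1) x) + \<epsilon> i x"
    and rho_convex: "convex_on UNIV \<rho>"
    and psi_mono: "mono \<psi>"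
    and psi_deriv: "\<And>x y. \<rho> y \<ge> \<rho> x + \<psi> x * (y - x)"
    and eps0_pos: "\<epsilon>0 > 0"
    and gamma: "\<gamma> > 1"
    and psi_int: "(\<integral>\<^sup>+ t. ennreal ((\<psi> t)\<^sup>2 * (1 + \<bar>t\<bar>) powr (- \<gamma>)) \<partial>lborel) < \<infinity>"
    and q_range: "\<gamma> < q" "q < \<gamma> + 2"
    and eps_Lq: "\<And>i. (\<integral>\<^sup>+ x. ennreal (\<bar>\<epsilon> i x\<bar> powr q) \<partial>M) < \<infinity>"
    and f_diff: "\<And>k v. k \<le> p \<Longrightarrow>
                   ((deriv ^^ k) f\<^sub>\<epsilon> has_real_derivative (deriv ^^ Suc k) f\<^sub>\<epsilon> v) (at v)"
    and f_int: "(\<Sum>k\<le>p + 1. \<integral>\<^sup>+ v. ennreal (((deriv ^^ k) f\<^sub>\<epsilon> v)\<^sup>2 * (1 + \<bar>v\<bar>) powr \<gamma>) \<partial>lborel) < \<infinity>"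
  shows "\<exists>\<kappa>. 0 < \<kappa> \<and> \<kappa> < 1 \<and>
           (\<forall>l\<le>p. \<exists>C. \<forall>\<^sub>F i in sequentially.
              omega_bar M f\<^sub>\<epsilon> \<nu> \<psi> \<epsilon>0
                (\<lambda>k. e (int k))
                (\<lambda>k x. G (\<lambda>j. if j = k then \<epsilon>' 0 x else \<epsilon> (int k - int j) x))
                l i \<le> ennreal (C * \<kappa> ^ i))"
proof -
  \<comment> \<open>the locale asks for \<open>0 < L\<close>; a larger constant keeps \<open>\<nu>\<close> Lipschitz\<close>
  define L' where "L' = max L (1 / 2)"
  interpret ar_moments M \<epsilon> \<epsilon>' f\<^sub>\<epsilon> \<nu> G e L' q
    using lipschitz_on_mono[OF lip, of UNIV L'] L_lt1 gamma q_range
    by (intro ar_moments.intro ar_coupling.intro ar_moments_axioms.intro prob indep dens dens' G_meas e_G e_rec eps_Lq)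
       (auto simp: L'_def)
  define s where "s = q - \<gamma>"
  have s: "0 \<le> \<gamma>" "q = s + \<gamma>" "0 < s" "s \<le> 2"
    using gamma q_range by (auto simp: s_def)
  have energy_finite: "weighted_energy \<gamma> ((deriv ^^ k) f\<^sub>\<epsilon>) < \<infinity>" if "k \<le> p + 1" for k
    using f_int[folded weighted_energy_def] that
    by (metis atMost_iff ennreal_sum_less_top finite_atMost infinity_ennreal_def)
  show ?thesis
  proof (rule exI[of _ "L' powr (s / 2)"], intro conjI allI impI)
    show "0 < L' powr (s / 2)" "L' powr (s / 2) < 1"
      using L_pos L_less_1 s powr_less_mono2[of "s / 2" L' 1] by auto
    fix l assume "l \<le> p"
    \<comment> \<open>of \<open>\<rho>\<close> and \<open>\<psi>\<close> only the measurability of \<open>\<psi>\<close> is needed, and \<open>\<epsilon>0\<close> may have any sign\<close>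
    from omega_bar_le_geometric[OF higher_deriv_cond_dens f_diff energy_finite energy_finite s
        borel_measurable_mono[OF psi_mono]]
    obtain C where "\<And>i. omega_bar M f\<^sub>\<epsilon> \<nu> \<psi> \<epsilon>0 (\<lambda>k. e (int k)) estar l i \<le> ennreal (C * (L' powr (s / 2)) ^ i)"
      using psi_int f_diff \<open>l \<le> p\<close> unfolding weighted_energy_def[symmetric] by fastforce
    then show "\<exists>C. \<forall>\<^sub>F i in sequentially. omega_bar M f\<^sub>\<epsilon> \<nu> \<psi> \<epsilon>0 (\<lambda>k. e (int k))
        (\<lambda>k x. G (\<lambda>j. if j = k then \<epsilon>' 0 x else \<epsilon> (int k - int j) x)) l i \<le> ennreal (C * (L' powr (s / 2)) ^ i)"
      by (intro exI[of _ C] always_eventually allI) (simp add: estar_eq[abs_def, symmetric])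
  qed
qed

end
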